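(* Fix an integer $N\ge 3$. There is a conditional (adaptive) sampling procedure which, knowing only $N$, queries the values $F_{\vec B}(x_1),\dots,F_{\vec B}(x_k)$ of an unknown CDF $F_{\vec B}$ at $k\le\lfloor N/2\rfloor$ points, where each query point $x_j$ is determined by $N$ and the previously obtained values $F_{\vec B}(x_1),\dots,F_{\vec B}(x_{j-1})$, and which, for every binary digit vector $\vec B=(b_0,\dots,b_{N-1})$ with $2\le\|\vec B\|\le N-1$, completely determines $\vec B$ (and hence $F_{\vec B}$) from these values.
   Context: A binary digit vector of length (scale factor) $N\ge3$ is $\vec B=(b_0,\dots,b_{N-1})\in\{0,1\}^N$ with $2\le\|\vec B\|:=\sum_i b_i\le N-1$; its digit set is $D=\{i:b_i=1\}$. With $\phi_d(x)=(x+d)/N$ for $d\in D$, let $\mu_{\vec B}$ be the unique Borel probability measure with $\mu_{\vec B}=\frac{1}{\|\vec B\|}\sum_{d\in D}\mu_{\vec B}\circ\phi_d^{-1}$; it is supported on the attractor $C_{\vec B}\subset[0,1]$ of $\{\phi_d\}_{d\in D}$. The CDF is $F_{\vec B}(x)=\mu_{\vec B}([0,x])$, $x\in[0,1]$. *)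

theory Defs
  imports "HOL-Analysis.Analysis"
begin

definition digit_vector :: "nat \<Rightarrow> nat list \<Rightarrow> bool" where
  "digit_vector N B \<longleftrightarrow> length B = N \<and> set B \<subseteq> {0, 1} \<and>
     2 \<le> sum_list B \<and> sum_list B \<le> N - 1"

definition digit_set :: "nat list \<Rightarrow> nat set" where
  "digit_set B = {i. i < length B \<and> B ! i = 1}"

definition phi :: "nat \<Rightarrow> nat \<Rightarrow> real \<Rightarrow> real" where
  "phi N d x = (x + real d) / real N"

definition self_similar :: "nat list \<Rightarrow> real measure \<Rightarrow> bool" where
  "self_similar B \<mu> \<longleftrightarrow> sets \<mu> = sets borel \<and> emeasure \<mu> UNIV = 1 \<and>
     (\<forall>A \<in> sets borel. emeasure \<mu> A =
        (\<Sum>d\<in>digit_set B. emeasure \<mu> (phi (length B) d -` A)) / ennreal (real (sum_list B)))"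

definition mu_B :: "nat list \<Rightarrow> real measure" where
  "mu_B B = (THE \<mu>. self_similar B \<mu>)"

definition F_B :: "nat list \<Rightarrow> real \<Rightarrow> real" where
  "F_B B x = measure (mu_B B) {0..x}"

text \<open>Adaptive querying: a strategy q maps the list of values obtained so far to the
  next query point; answers q F j is the list of the first j obtained values.\<close>
fun answers :: "(real list \<Rightarrow> real) \<Rightarrow> (real \<Rightarrow> real) \<Rightarrow> nat \<Rightarrow> real list" where
  "answers q F 0 = []"
| "answers q F (Suc j) = answers q F j @ [F (q (answers q F j))]"

end

theory Submission
  imports Defs "HOL-Probability.Probability"
begin

(* Write D for the digit set, n = ||B|| and F = F_B.  Self-similarity says
  n F(x) = sum_{d in D} F(N x - d); together with F = 0 on (-inf, 0] and F = 1 on [1, inf) this gives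
  F((a + y) / N) = (#{d in D. d < a} + b_a F(y)) / n  for a < N and 0 <= y <= 1.
  The digits are read in pairs (2j, 2j+1), one query per pair.  While no digit below 2j has been
  found, the query point is phi_{2j+1}^(N+1)(1), where F equals h_{N+1} with h_0 = 1 and
  h_(i+1) = (b_{2j} + b_{2j+1} h_i) / n; this number determines b_{2j}, b_{2j+1} and, unless both
  vanish, also n.  Afterwards c = #{d in D. d < 2j} > 0 and n are known, and at
  phi_{2j+1}(phi_{2j}(0)) the value (c + b_{2j} + b_{2j+1} c / n) / n reveals both digits since
  0 < c / n < 1 (if c = n, all digits are already known).  For odd N the last digit N - 1 is
  recovered from n.  That F_B is well defined rests on existence (the law of a random N-adic
  expansion with uniform digits in D is self-similar) and uniqueness (the difference of two such
  CDFs shrinks by the factor 1 / n under the self-similarity equation) of the self-similar measure. *)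

section \<open>Digit sets\<close>

lemma card_digit_set:
  assumes "set B \<subseteq> {0, 1}"
  shows "card (digit_set B) = sum_list B"
proof -
  have "sum_list B = (\<Sum>i<length B. B ! i)"
    by (simp add: sum_list_sum_nth atLeast0LessThan)
  also have "\<dots> = (\<Sum>i<length B. of_bool (B ! i = 1))"
    using assms nth_mem by (intro sum.cong) fastforce+
  also have "\<dots> = card (digit_set B)"
    by (simp add: digit_set_def lessThan_def Collect_conj_eq Int_commute)
  finally show ?thesis ..
qed

lemma digit_set_subset_lessThan: "digit_set B \<subseteq> {..<length B}"
  unfolding digit_set_def by auto

lemma finite_digit_set [simp]: "finite (digit_set B)"
  using digit_set_subset_lessThan finite_subset by blast

lemma digit_set_inject:
  assumes "length B = length B'" "set B \<subseteq> {0, 1}" "set B' \<subseteq> {0, 1}"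
    and "digit_set B = digit_set B'"
  shows "B = B'"
proof (rule nth_equalityI)
  fix i assume i: "i < length B"
  have "B ! i \<in> {0, 1}" "B' ! i \<in> {0, 1}"
    using i assms(1-3) nth_mem by (metis subsetD)+
  moreover have "B ! i = 1 \<longleftrightarrow> B' ! i = 1"
    using assms(1,4) i unfolding digit_set_def set_eq_iff by auto
  ultimately show "B ! i = B' ! i" by auto
qed (fact assms(1))

lemma digit_vector_ge_3: "digit_vector N B \<Longrightarrow> 3 \<le> N"
  unfolding digit_vector_def by linarith

lemma card_Int_lessThan_Suc:
  fixes A :: "nat set"
  shows "card (A \<inter> {..<Suc a}) = card (A \<inter> {..<a}) + of_bool (a \<in> A)"
  by (simp add: lessThan_Suc Int_insert_right card_insert_if)

lemma Int_lessThan_Suc_eqI: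
  fixes A A' :: "nat set"
  assumes "A \<inter> {..<k} = A' \<inter> {..<k}" "k \<in> A \<longleftrightarrow> k \<in> A'"
  shows "A \<inter> {..<Suc k} = A' \<inter> {..<Suc k}"
  using assms by (auto simp: lessThan_Suc)

lemma Int_lessThan_add_2_eqI:
  fixes A A' :: "nat set"
  assumes "A \<inter> {..<k} = A' \<inter> {..<k}" "k \<in> A \<longleftrightarrow> k \<in> A'" "k + 1 \<in> A \<longleftrightarrow> k + 1 \<in> A'"
  shows "A \<inter> {..<k + 2} = A' \<inter> {..<k + 2}"
  using Int_lessThan_Suc_eqI[OF Int_lessThan_Suc_eqI[OF assms(1,2)]] assms(3) by simp

section \<open>Existence of the self-similar measure\<close>

(* Capping the digits at N makes the series converge for every stream. *)
definition digit_expansion :: "nat \<Rightarrow> nat stream \<Rightarrow> real" where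
  "digit_expansion N \<omega> = (\<Sum>i. real (min (\<omega> !! i) N) / real N ^ Suc i)"

lemma summable_digit_expansion:
  assumes "2 \<le> N"
  shows "summable (\<lambda>i. real (min (\<omega> !! i) N) / real N ^ Suc i)"
proof (rule summable_comparison_test')
  show "summable (\<lambda>i. real N * (1 / real N) ^ Suc i)"
    using assms by (intro summable_mult summable_geometric summable_ignore_initial_segment[where k=1, simplified]) auto
  have "real (min (\<omega> !! i) N) / real N ^ Suc i \<le> real N / real N ^ Suc i" for i
    by (intro divide_right_mono) auto
  then show "norm (real (min (\<omega> !! i) N) / real N ^ Suc i) \<le> real N * (1 / real N) ^ Suc i" for i
    by (simp add: power_one_over)
qed

lemma digit_expansion_Stream:
  assumes "2 \<le> N" "d \<le> N"
  shows "digit_expansion N (d ## \<omega>) = phi N d (digit_expansion N \<omega>)"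
proof -
  let ?f = "\<lambda>i. real (min ((d ## \<omega>) !! i) N) / real N ^ Suc i"
  have "digit_expansion N (d ## \<omega>) = (\<Sum>i. ?f (Suc i)) + ?f 0"
    unfolding digit_expansion_def
    using suminf_split_head[OF summable_digit_expansion[OF assms(1), of "d ## \<omega>"]] by simp
  also have "(\<Sum>i. ?f (Suc i)) = (\<Sum>i. real (min (\<omega> !! i) N) / real N ^ Suc i / real N)"
    by (simp add: field_simps)
  also have "\<dots> = digit_expansion N \<omega> / real N"
    unfolding digit_expansion_def by (rule suminf_divide[OF summable_digit_expansion[OF assms(1)]])
  finally show ?thesis
    using assms unfolding phi_def by (simp add: add_divide_distrib)
qed

lemma measurable_digit_expansion [measurable]:
  "digit_expansion N \<in> borel_measurable (stream_space (measure_pmf p))"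
  unfolding digit_expansion_def by measurable

lemma measurable_phi [measurable]: "phi N d \<in> borel_measurable borel"
  unfolding phi_def by measurable

lemma self_similar_distr_digit_expansion:
  assumes B: "digit_vector N B"
  defines "M \<equiv> stream_space (measure_pmf (pmf_of_set (digit_set B)))"
  shows "self_similar B (distr M borel (digit_expansion N))"
proof -
  let ?D = "digit_set B" and ?\<mu> = "distr M borel (digit_expansion N)"
  have N: "3 \<le> N" "length B = N" using B digit_vector_ge_3 by (auto simp: digit_vector_def)
  have card_D: "card ?D = sum_list B"
    using B card_digit_set unfolding digit_vector_def by blast
  then have "2 \<le> card ?D" using B by (simp add: digit_vector_def)
  then have "?D \<noteq> {}" by auto
  interpret M: prob_space M
    unfolding M_def by (rule prob_space.prob_space_stream_space[OF prob_space_measure_pmf])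
  have \<mu>_eq: "emeasure ?\<mu> A = (\<integral>\<^sup>+\<omega>. indicator A (digit_expansion N \<omega>) \<partial>M)"
    if "A \<in> sets borel" for A
  proof -
    have "emeasure ?\<mu> A = (\<integral>\<^sup>+x. indicator A x \<partial>?\<mu>)"
      using that by simp
    also have "\<dots> = (\<integral>\<^sup>+\<omega>. indicator A (digit_expansion N \<omega>) \<partial>M)"
      using that unfolding M_def by (intro nn_integral_distr) simp_all
    finally show ?thesis .
  qed
  have "emeasure ?\<mu> A = (\<Sum>d\<in>?D. emeasure ?\<mu> (phi N d -` A)) / ennreal (real (sum_list B))"
    if A: "A \<in> sets borel" for A
  proof -
    have "emeasure ?\<mu> A = (\<integral>\<^sup>+\<omega>. indicator A (digit_expansion N \<omega>) \<partial>M)"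
      by (rule \<mu>_eq[OF A])
    also have "\<dots> = (\<integral>\<^sup>+d. (\<integral>\<^sup>+\<omega>. indicator A (digit_expansion N (d ## \<omega>)) \<partial>M) \<partial>pmf_of_set ?D)"
      unfolding M_def by (rule prob_space.nn_integral_stream_space[OF prob_space_measure_pmf]) (use A in simp)
    also have "\<dots> = (\<Sum>d\<in>?D. \<integral>\<^sup>+\<omega>. indicator A (digit_expansion N (d ## \<omega>)) \<partial>M) / card ?D"
      using \<open>?D \<noteq> {}\<close> by (simp add: nn_integral_pmf_of_set)
    also have "\<dots> = (\<Sum>d\<in>?D. emeasure ?\<mu> (phi N d -` A)) / card ?D"
    proof (intro arg_cong2[where f="(/)"] sum.cong refl)
      fix d assume "d \<in> ?D"
      then have "d \<le> N" using digit_set_subset_lessThan N by fastforce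
      moreover have "phi N d -` A \<in> sets borel"
        using measurable_sets_borel[OF measurable_phi A] .
      ultimately show "(\<integral>\<^sup>+\<omega>. indicator A (digit_expansion N (d ## \<omega>)) \<partial>M)
          = emeasure ?\<mu> (phi N d -` A)"
        using N by (simp add: \<mu>_eq digit_expansion_Stream indicator_def)
    qed
    finally show ?thesis
      by (simp add: card_D ennreal_of_nat_eq_real_of_nat)
  qed
  moreover have "emeasure ?\<mu> UNIV = 1"
  proof -
    have "prob_space ?\<mu>"
      by (rule M.prob_space_distr) (simp add: M_def)
    then have "emeasure ?\<mu> (space ?\<mu>) = 1"
      by (rule prob_space.emeasure_space_1)
    then show ?thesis by simp
  qed
  moreover have "sets ?\<mu> = sets borel" by simp
  ultimately show ?thesis
    unfolding self_similar_def N(2) by blast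
qed

section \<open>The CDF of a self-similar measure\<close>

locale self_similar_measure =
  fixes N :: nat and B :: "nat list" and \<mu> :: "real measure"
  assumes digit_vector: "digit_vector N B" and self_similar: "self_similar B \<mu>"
begin

abbreviation D :: "nat set" where "D \<equiv> digit_set B"
abbreviation n :: nat where "n \<equiv> sum_list B"

lemma length_B: "length B = N"
  using digit_vector unfolding digit_vector_def by simp

lemma card_D: "card D = n"
  using digit_vector card_digit_set unfolding digit_vector_def by blast

lemma n_ge_2: "2 \<le> n"
  using digit_vector unfolding digit_vector_def by simp

lemma n_less_N: "n < N"
  using digit_vector digit_vector_ge_3 unfolding digit_vector_def by fastforce

lemma N_ge_3: "3 \<le> N"
  using digit_vector_ge_3 digit_vector .

lemma digit_less_N: "d \<in> D \<Longrightarrow> d < N"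
  using digit_set_subset_lessThan length_B by blast

lemma sets_\<mu>: "sets \<mu> = sets borel"
  using self_similar unfolding self_similar_def by simp

lemma prob_space_\<mu>: "prob_space \<mu>"
  by (rule prob_spaceI)
     (use self_similar sets_eq_imp_space_eq[OF sets_\<mu>] in \<open>simp add: self_similar_def\<close>)

sublocale real_distribution \<mu>
  unfolding real_distribution_def real_distribution_axioms_def
  using prob_space_\<mu> sets_\<mu> by simp

lemma cdf_self_similar: "n * cdf \<mu> x = (\<Sum>d\<in>D. cdf \<mu> (real N * x - real d))"
proof -
  have vimage: "phi N d -` {..x} = {..real N * x - real d}" for d
    using N_ge_3 by (auto simp: phi_def divide_le_eq algebra_simps)
  have "emeasure \<mu> {..x} = (\<Sum>d\<in>D. emeasure \<mu> (phi N d -` {..x})) / ennreal (real n)"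
    using self_similar atMost_borel[of x] unfolding self_similar_def length_B by blast
  then have "ennreal (cdf \<mu> x) = (\<Sum>d\<in>D. ennreal (cdf \<mu> (real N * x - real d))) / ennreal (real n)"
    by (simp add: vimage cdf_def emeasure_eq_measure)
  also have "\<dots> = ennreal ((\<Sum>d\<in>D. cdf \<mu> (real N * x - real d)) / real n)"
    using n_ge_2 by (simp add: cdf_nonneg sum_nonneg divide_ennreal)
  finally have "cdf \<mu> x = (\<Sum>d\<in>D. cdf \<mu> (real N * x - real d)) / real n"
    by (simp add: cdf_nonneg sum_nonneg ennreal_inj)
  moreover have "real n \<noteq> 0" using n_ge_2 by linarith
  ultimately show ?thesis by simp
qed

lemma cdf_le_cdf_scaled: "cdf \<mu> x \<le> cdf \<mu> (real N * x)"
proof -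
  have "n * cdf \<mu> x \<le> (\<Sum>d\<in>D. cdf \<mu> (real N * x))"
    unfolding cdf_self_similar by (intro sum_mono cdf_nondecreasing) simp
  then show ?thesis
    using n_ge_2 by (simp add: card_D)
qed

lemma cdf_scaled_le_cdf: "cdf \<mu> (1 + real N * (x - 1)) \<le> cdf \<mu> x"
proof -
  have "(\<Sum>d\<in>D. cdf \<mu> (1 + real N * (x - 1))) \<le> n * cdf \<mu> x"
    unfolding cdf_self_similar
  proof (intro sum_mono cdf_nondecreasing)
    fix d assume "d \<in> D"
    then have "real d + 1 \<le> real N" using digit_less_N[of d] by linarith
    then show "1 + real N * (x - 1) \<le> real N * x - real d" by (simp add: algebra_simps)
  qed
  then show ?thesis
    using n_ge_2 by (simp add: card_D)
qed

lemma filterlim_power_N_at_top: "filterlim (\<lambda>k. real N ^ k) at_top sequentially"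
  by (rule filterlim_at_infinity_imp_filterlim_at_top[OF filterlim_realpow_sequentially_gt1])
     (use N_ge_3 in auto)

lemma cdf_eq_0_neg:
  assumes "x < 0"
  shows "cdf \<mu> x = 0"
proof -
  have le: "cdf \<mu> x \<le> cdf \<mu> (x * real N ^ k)" for k
  proof (induction k)
    case (Suc k)
    also have "cdf \<mu> (x * real N ^ k) \<le> cdf \<mu> (x * real N ^ Suc k)"
      using cdf_le_cdf_scaled[of "x * real N ^ k"] by (simp add: algebra_simps)
    finally show ?case .
  qed simp
  have "filterlim (\<lambda>k. x * real N ^ k) at_bot sequentially"
    using assms by (intro filterlim_tendsto_neg_mult_at_bot[OF tendsto_const _ filterlim_power_N_at_top])
  then have "(\<lambda>k. cdf \<mu> (x * real N ^ k)) \<longlonglongrightarrow> 0"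
    by (rule filterlim_compose[OF cdf_lim_at_bot])
  then have "cdf \<mu> x \<le> 0"
    using le by (intro LIMSEQ_le_const) auto
  then show ?thesis
    using cdf_nonneg by (simp add: antisym)
qed

lemma cdf_eq_1_gt:
  assumes "1 < x"
  shows "cdf \<mu> x = 1"
proof -
  have le: "cdf \<mu> (1 + (x - 1) * real N ^ k) \<le> cdf \<mu> x" for k
  proof (induction k)
    case (Suc k)
    have "cdf \<mu> (1 + (x - 1) * real N ^ Suc k) \<le> cdf \<mu> (1 + (x - 1) * real N ^ k)"
      using cdf_scaled_le_cdf[of "1 + (x - 1) * real N ^ k"] by (simp add: algebra_simps)
    also note Suc
    finally show ?case .
  qed simp
  have "filterlim (\<lambda>k. (x - 1) * real N ^ k) at_top sequentially"
    using assms by (intro filterlim_tendsto_pos_mult_at_top[OF tendsto_const _ filterlim_power_N_at_top]) simp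
  then have "filterlim (\<lambda>k. 1 + (x - 1) * real N ^ k) at_top sequentially"
    by (rule filterlim_tendsto_add_at_top[OF tendsto_const])
  then have "(\<lambda>k. cdf \<mu> (1 + (x - 1) * real N ^ k)) \<longlonglongrightarrow> 1"
    by (rule filterlim_compose[OF cdf_lim_at_top_prob])
  then have "1 \<le> cdf \<mu> x"
    using le by (intro LIMSEQ_le_const2) auto
  then show ?thesis
    using cdf_bounded_prob by (simp add: antisym)
qed

lemma cdf_eq_0:
  assumes "x \<le> 0"
  shows "cdf \<mu> x = 0"
proof (cases "x = 0")
  case True
  have "2 * cdf \<mu> 0 \<le> n * cdf \<mu> 0"
    using n_ge_2 cdf_nonneg[of 0] by (intro mult_right_mono) auto
  also have "n * cdf \<mu> 0 = (\<Sum>d\<in>D. if d = 0 then cdf \<mu> 0 else 0)"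
    unfolding cdf_self_similar by (intro sum.cong refl) (auto intro: cdf_eq_0_neg)
  also have "\<dots> \<le> cdf \<mu> 0"
    using cdf_nonneg[of 0] by simp
  finally show ?thesis
    using cdf_nonneg[of 0] unfolding True by linarith
qed (use assms cdf_eq_0_neg in auto)

lemma cdf_eq_1:
  assumes "1 \<le> x"
  shows "cdf \<mu> x = 1"
proof (cases "x = 1")
  case True
  have "2 * (1 - cdf \<mu> 1) \<le> n * (1 - cdf \<mu> 1)"
    using n_ge_2 cdf_bounded_prob[of 1] by (intro mult_right_mono) auto
  also have "n * (1 - cdf \<mu> 1) = (\<Sum>d\<in>D. 1 - cdf \<mu> (real N * 1 - real d))"
    using cdf_self_similar[of 1] by (simp add: sum_subtractf card_D right_diff_distrib)
  also have "\<dots> = (\<Sum>d\<in>D. if d = N - 1 then 1 - cdf \<mu> 1 else 0)"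
  proof (intro sum.cong refl)
    fix d assume "d \<in> D"
    then have "d < N" by (rule digit_less_N)
    then show "1 - cdf \<mu> (real N * 1 - real d) = (if d = N - 1 then 1 - cdf \<mu> 1 else 0)"
      using cdf_eq_1_gt[of "real N - real d"] by (auto simp: of_nat_diff)
  qed
  also have "\<dots> \<le> 1 - cdf \<mu> 1"
    using cdf_bounded_prob[of 1] by simp
  finally show ?thesis
    using cdf_bounded_prob[of 1] unfolding True by (smt (verit))
qed (use assms cdf_eq_1_gt in auto)

lemma cdf_phi:
  assumes "a < N" "0 \<le> y" "y \<le> 1"
  shows "cdf \<mu> (phi N a y) = (card (D \<inter> {..<a}) + of_bool (a \<in> D) * cdf \<mu> y) / n"
proof -
  have "cdf \<mu> (real N * phi N a y - real d) = of_bool (d < a) + (if d = a then cdf \<mu> y else 0)" for d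
  proof -
    have "real N * phi N a y - real d = real a + y - real d"
      using assms by (simp add: phi_def)
    moreover consider "d < a" | "d = a" | "a < d" by linarith
    then have "cdf \<mu> (real a + y - real d) = of_bool (d < a) + (if d = a then cdf \<mu> y else 0)"
      by cases (use assms cdf_eq_0 cdf_eq_1 in auto)
    ultimately show ?thesis by simp
  qed
  then have "cdf \<mu> (phi N a y) * n = card (D \<inter> {..<a}) + of_bool (a \<in> D) * cdf \<mu> y"
    by (simp add: cdf_self_similar mult.commute sum.distrib Int_def lessThan_def)
  moreover have "real n \<noteq> 0" using n_ge_2 by linarith
  ultimately show ?thesis
    by (intro eq_divide_imp)
qed

lemma measure_atLeastAtMost_eq_cdf:
  assumes "0 \<le> x"
  shows "measure \<mu> {0..x} = cdf \<mu> x"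
proof -
  have "{0..x} = {..x} - {..<0}" using assms by auto
  moreover have "measure \<mu> ({..x} - {..<0}) = cdf \<mu> x - measure \<mu> {..<0}"
    unfolding cdf_def by (rule finite_measure_Diff) (use assms in auto)
  ultimately have "measure \<mu> {0..x} = cdf \<mu> x - measure \<mu> {..<0}"
    by simp
  moreover have "measure \<mu> {..<0} \<le> cdf \<mu> 0"
    unfolding cdf_def by (intro finite_measure_mono) auto
  ultimately show ?thesis
    using cdf_eq_0[of 0] by (simp add: measure_nonneg antisym)
qed

end

section \<open>Uniqueness of the self-similar measure\<close>

(* For each x at most one term of the sum is nonzero, so every application of the equation
  divides the bound on H by m. *)
lemma self_similar_fun_eq_0:
  fixes H :: "real \<Rightarrow> real" and D :: "nat set" and s m C :: real
  assumes "finite D" "1 < m"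
    and bounded: "\<And>x. \<bar>H x\<bar> \<le> C"
    and outside: "\<And>x. x \<le> 0 \<or> 1 \<le> x \<Longrightarrow> H x = 0"
    and self_similar: "\<And>x. m * H x = (\<Sum>d\<in>D. H (s * x - d))"
  shows "H x = 0"
proof -
  have "\<bar>H x\<bar> \<le> C / m ^ k" for k x
  proof (induction k arbitrary: x)
    case 0
    show ?case using bounded by simp
  next
    case (Suc k)
    define d\<^sub>0 where "d\<^sub>0 = nat \<lfloor>s * x\<rfloor>"
    have "(\<Sum>d\<in>D. H (s * x - d)) = (\<Sum>d\<in>D \<inter> {d\<^sub>0}. H (s * x - d))"
    proof (rule sum.mono_neutral_right[OF \<open>finite D\<close>])
      show "\<forall>d\<in>D - D \<inter> {d\<^sub>0}. H (s * x - d) = 0"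
      proof
        fix d assume "d \<in> D - D \<inter> {d\<^sub>0}"
        then have "\<lfloor>s * x\<rfloor> \<noteq> int d"
          unfolding d\<^sub>0_def by auto
        then have "s * x - d \<le> 0 \<or> 1 \<le> s * x - d"
          by (auto simp: floor_eq_iff)
        then show "H (s * x - d) = 0" by (rule outside)
      qed
    qed auto
    also have "\<bar>\<dots>\<bar> \<le> C / m ^ k"
      using Suc.IH[of "s * x - d\<^sub>0"] Suc.IH[of 0] by (cases "d\<^sub>0 \<in> D") auto
    finally have "m * \<bar>H x\<bar> \<le> C / m ^ k"
      using self_similar[of x] \<open>1 < m\<close> by (simp add: abs_mult)
    then show ?case
      using \<open>1 < m\<close> by (simp add: field_simps)
  qed
  moreover have "(\<lambda>k. C / m ^ k) \<longlonglongrightarrow> 0"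
    using \<open>1 < m\<close> by (rule LIMSEQ_divide_realpow_zero)
  ultimately have "\<bar>H x\<bar> \<le> 0"
    by (intro LIMSEQ_le_const) auto
  then show ?thesis by simp
qed

lemma self_similar_unique:
  assumes B: "digit_vector N B" and "self_similar B \<mu>" "self_similar B \<nu>"
  shows "\<mu> = \<nu>"
proof -
  interpret \<mu>: self_similar_measure N B \<mu> using assms by unfold_locales
  interpret \<nu>: self_similar_measure N B \<nu> using assms by unfold_locales
  have "cdf \<mu> x - cdf \<nu> x = 0" for x
  proof (rule self_similar_fun_eq_0[where H = "\<lambda>x. cdf \<mu> x - cdf \<nu> x" and D = "digit_set B"
        and m = "sum_list B" and s = N and C = 1])
    show "1 < real (sum_list B)" using \<mu>.n_ge_2 by simp
    show "\<bar>cdf \<mu> x - cdf \<nu> x\<bar> \<le> 1" for x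
      using \<mu>.cdf_nonneg \<mu>.cdf_bounded_prob \<nu>.cdf_nonneg \<nu>.cdf_bounded_prob
      by (smt (verit))
    show "cdf \<mu> x - cdf \<nu> x = 0" if "x \<le> 0 \<or> 1 \<le> x" for x
      using that \<mu>.cdf_eq_0 \<nu>.cdf_eq_0 \<mu>.cdf_eq_1 \<nu>.cdf_eq_1 by auto
    show "sum_list B * (cdf \<mu> x - cdf \<nu> x)
        = (\<Sum>d\<in>digit_set B. cdf \<mu> (N * x - d) - cdf \<nu> (N * x - d))" for x :: real
      by (simp add: right_diff_distrib sum_subtractf \<mu>.cdf_self_similar \<nu>.cdf_self_similar)
  qed simp
  then have "cdf \<mu> = cdf \<nu>" by auto
  then show ?thesis
    using cdf_unique \<mu>.real_distribution_axioms \<nu>.real_distribution_axioms by blast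
qed

(* mu_B is defined by THE, so it is self-similar only because a self-similar measure exists
  and is unique. *)
lemma self_similar_mu_B:
  assumes "digit_vector N B"
  shows "self_similar B (mu_B B)"
  unfolding mu_B_def
  by (rule theI[where P = "self_similar B", OF self_similar_distr_digit_expansion[OF assms]])
     (erule self_similar_unique[OF assms _ self_similar_distr_digit_expansion[OF assms]])

section \<open>Decoding the probe values\<close>

(* The CDF at phi_{2j+1}^i(1) when no digit lies below 2j: b0, b1 are the digits 2j, 2j+1
  and m = ||B||. *)
fun leading_value :: "bool \<Rightarrow> bool \<Rightarrow> real \<Rightarrow> nat \<Rightarrow> real" where
  "leading_value b\<^sub>0 b\<^sub>1 m 0 = 1"
| "leading_value b\<^sub>0 b\<^sub>1 m (Suc i) = (of_bool b\<^sub>0 + of_bool b\<^sub>1 * leading_value b\<^sub>0 b\<^sub>1 m i) / m"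

lemma leading_value_nonneg: "0 \<le> m \<Longrightarrow> 0 \<le> leading_value b\<^sub>0 b\<^sub>1 m i"
  by (induction i) auto

lemma leading_value_pos: "0 < m \<Longrightarrow> b\<^sub>0 \<or> b\<^sub>1 \<Longrightarrow> 0 < leading_value b\<^sub>0 b\<^sub>1 m i"
  by (induction i) (auto simp: add_nonneg_pos add_pos_nonneg leading_value_nonneg)

lemma leading_value_eq_0_iff:
  "0 < m \<Longrightarrow> leading_value b\<^sub>0 b\<^sub>1 m (Suc i) = 0 \<longleftrightarrow> \<not> b\<^sub>0 \<and> \<not> b\<^sub>1"
  using leading_value_pos[of m b\<^sub>0 b\<^sub>1 "Suc i"] by auto

lemma leading_value_antimono:
  assumes "0 < m" "m \<le> m'"
  shows "leading_value b\<^sub>0 b\<^sub>1 m' i \<le> leading_value b\<^sub>0 b\<^sub>1 m i"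
proof (induction i)
  case (Suc i)
  have "of_bool b\<^sub>0 + of_bool b\<^sub>1 * leading_value b\<^sub>0 b\<^sub>1 m' i
      \<le> of_bool b\<^sub>0 + of_bool b\<^sub>1 * leading_value b\<^sub>0 b\<^sub>1 m i"
    using Suc by (simp add: mult_left_mono)
  then show ?case
    using assms leading_value_nonneg[of m b\<^sub>0 b\<^sub>1 i] by (simp add: frac_le)
qed simp

lemma leading_value_strict_antimono:
  assumes "0 < m" "m < m'" "b\<^sub>0 \<or> b\<^sub>1"
  shows "leading_value b\<^sub>0 b\<^sub>1 m' (Suc i) < leading_value b\<^sub>0 b\<^sub>1 m (Suc i)"
proof -
  have "0 < of_bool b\<^sub>0 + of_bool b\<^sub>1 * leading_value b\<^sub>0 b\<^sub>1 m' i"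
    using assms leading_value_pos[of m' b\<^sub>0 b\<^sub>1 i] leading_value_nonneg[of m' b\<^sub>0 b\<^sub>1 i] by auto
  moreover have "leading_value b\<^sub>0 b\<^sub>1 m' i \<le> leading_value b\<^sub>0 b\<^sub>1 m i"
    using assms by (intro leading_value_antimono) auto
  ultimately show ?thesis
    using assms by (auto intro!: frac_less2)
qed

lemma leading_value_inject:
  assumes "0 < m" "0 < m'" "b\<^sub>0 \<or> b\<^sub>1"
    and "leading_value b\<^sub>0 b\<^sub>1 m (Suc i) = leading_value b\<^sub>0 b\<^sub>1 m' (Suc i)"
  shows "m = m'"
  using leading_value_strict_antimono[of m m' b\<^sub>0 b\<^sub>1 i]
    leading_value_strict_antimono[of m' m b\<^sub>0 b\<^sub>1 i] assms
  by (cases m m' rule: linorder_cases) auto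

lemma leading_value_True_False: "leading_value True False m (Suc i) = 1 / m"
  by simp

lemma leading_value_False_True: "leading_value False True m i = 1 / m ^ i"
  by (induction i) auto

lemma leading_value_True_True:
  assumes "2 \<le> m"
  shows "leading_value True True m i = 1 / (m - 1) + (m - 2) / (m - 1) / m ^ i"
proof -
  have "leading_value True True m i - 1 / (m - 1) = (m - 2) / (m - 1) / m ^ i"
  proof (induction i)
    case (Suc i)
    have "leading_value True True m (Suc i) - 1 / (m - 1) = (leading_value True True m i - 1 / (m - 1)) / m"
      using assms by (simp add: field_simps)
    then show ?case
      using Suc by simp
  qed (use assms in \<open>simp add: field_simps\<close>)
  then show ?thesis by simp
qed

lemma leading_value_True_True_bounds:
  assumes "3 \<le> m" "2 \<le> i"
  shows "1 / (m - 1) < leading_value True True m i" "leading_value True True m i < 1 / (m - 2)"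
proof -
  have "(m - 2) ^ 2 < m ^ 2"
    using assms by (intro power_strict_mono) auto
  also have "m ^ 2 \<le> m ^ i"
    using assms by (intro power_increasing) auto
  finally have "(m - 2) / (m - 1) / m ^ i < (m - 2) / (m - 1) / (m - 2) ^ 2"
    using assms by (intro divide_strict_left_mono) auto
  also have "\<dots> = 1 / ((m - 1) * (m - 2))"
    using assms by (simp add: power2_eq_square)
  also have "\<dots> = 1 / (m - 2) - 1 / (m - 1)"
  proof -
    have "m - 2 \<noteq> 0" "m - 1 \<noteq> 0" using assms by auto
    then show ?thesis by (simp add: field_simps)
  qed
  finally show "leading_value True True m i < 1 / (m - 2)"
    using assms by (simp add: leading_value_True_True)
  show "1 / (m - 1) < leading_value True True m i"
    using assms by (simp add: leading_value_True_True)
qed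

lemma leading_value_True_True_ne_inverse:
  fixes m k :: nat
  assumes "2 \<le> m" "2 \<le> k" "2 \<le> i"
  shows "leading_value True True m i \<noteq> 1 / k"
proof
  assume eq: "leading_value True True m i = 1 / k"
  show False
  proof (cases "m = 2")
    case True
    then show False
      using eq assms by (simp add: leading_value_True_True)
  next
    case False
    then have "3 \<le> real m" using assms by simp
    from leading_value_True_True_bounds[OF this assms(3)] eq
    have "1 / (real m - 1) < 1 / real k" "1 / real k < 1 / (real m - 2)"
      by simp_all
    then have "real (k + 1) < real m" "real m < real (k + 2)"
      using \<open>3 \<le> real m\<close> assms by (simp_all add: frac_less2 field_simps)
    then have "k + 1 < m" "m < k + 2"
      by (simp_all only: of_nat_less_iff)
    then show False by linarith
  qed
qed

lemma leading_value_gt_inverse_iff: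
  fixes m N :: nat
  assumes "2 \<le> m" "m < N"
  shows "1 / N < leading_value b\<^sub>0 b\<^sub>1 m (Suc N) \<longleftrightarrow> b\<^sub>0"
proof (cases b\<^sub>0)
  case True
  have "1 / N < 1 / m"
    using assms by (simp add: frac_less2)
  also have "\<dots> \<le> leading_value b\<^sub>0 b\<^sub>1 m (Suc N)"
    using True assms leading_value_nonneg[of m b\<^sub>0 b\<^sub>1 N] by (simp add: divide_right_mono)
  finally show ?thesis using True by simp
next
  case False
  have "real N < real (2 ^ N)"
    using less_exp[of N] by (simp only: of_nat_less_iff)
  also have "\<dots> \<le> 2 ^ Suc N" by simp
  also have "\<dots> \<le> real m ^ Suc N"
    using assms by (intro power_mono) auto
  finally have "1 / real m ^ Suc N < 1 / N"
    using assms by (intro divide_strict_left_mono) auto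
  moreover have "leading_value False False m (Suc N) = 0" by simp
  ultimately show ?thesis
    using False leading_value_False_True[of m "Suc N"]
    by (cases b\<^sub>1) (auto simp del: leading_value.simps)
qed

lemma leading_value_decode:
  fixes m m' N :: nat
  assumes "2 \<le> m" "m < N" "2 \<le> m'" "m' < N"
    and eq: "leading_value b\<^sub>0 b\<^sub>1 m (Suc N) = leading_value b\<^sub>0' b\<^sub>1' m' (Suc N)"
  shows "b\<^sub>0 = b\<^sub>0' \<and> b\<^sub>1 = b\<^sub>1' \<and> (b\<^sub>0 \<or> b\<^sub>1 \<longrightarrow> m = m')"
proof -
  have b\<^sub>0: "b\<^sub>0' = b\<^sub>0"
    using leading_value_gt_inverse_iff[of m N b\<^sub>0 b\<^sub>1]
      leading_value_gt_inverse_iff[of m' N b\<^sub>0' b\<^sub>1'] assms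
    by (simp only: eq)
  have b\<^sub>1: "b\<^sub>1' = b\<^sub>1"
  proof (cases b\<^sub>0)
    case True
    have "leading_value True True m (Suc N) \<noteq> 1 / m'"
      by (rule leading_value_True_True_ne_inverse) (use assms in auto)
    moreover have "leading_value True True m' (Suc N) \<noteq> 1 / m"
      by (rule leading_value_True_True_ne_inverse) (use assms in auto)
    ultimately show ?thesis
      using eq b\<^sub>0 True
      by (cases b\<^sub>1; cases b\<^sub>1') (auto simp del: leading_value.simps simp: leading_value_True_False)
  next
    case False
    then show ?thesis
      using eq b\<^sub>0 assms leading_value_eq_0_iff[of m False b\<^sub>1 N] leading_value_eq_0_iff[of m' False b\<^sub>1' N]
      by auto
  qed
  have "m = m'" if "b\<^sub>0 \<or> b\<^sub>1"
    using leading_value_inject[of m m' b\<^sub>0 b\<^sub>1 N] eq that assms unfolding b\<^sub>0 b\<^sub>1 by auto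
  with b\<^sub>0 b\<^sub>1 show ?thesis by auto
qed

lemma counted_value_decode:
  fixes c m :: real
  assumes "0 < c" "c < m"
    and "(c + of_bool b\<^sub>0 + of_bool b\<^sub>1 * c / m) / m = (c + of_bool b\<^sub>0' + of_bool b\<^sub>1' * c / m) / m"
  shows "b\<^sub>0 = b\<^sub>0' \<and> b\<^sub>1 = b\<^sub>1'"
proof -
  have "of_bool b\<^sub>0 + of_bool b\<^sub>1 * (c / m) = of_bool b\<^sub>0' + of_bool b\<^sub>1' * (c / m)"
    using assms by (simp add: divide_cancel_right)
  moreover have "0 < c / m" "c / m < 1"
    using assms by auto
  ultimately show ?thesis
    by (cases b\<^sub>0; cases b\<^sub>1; cases b\<^sub>0'; cases b\<^sub>1') auto
qed

section \<open>The adaptive strategy\<close>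

definition probe :: "nat \<Rightarrow> bool \<Rightarrow> nat \<Rightarrow> real" where
  "probe N leading j =
     (if leading then (phi N (2 * j + 1) ^^ Suc N) 1 else phi N (2 * j + 1) (phi N (2 * j) 0))"

definition strategy :: "nat \<Rightarrow> real list \<Rightarrow> real" where
  "strategy N vs =
     (if length vs < N div 2 then probe N (\<forall>v\<in>set vs. v = 0) (length vs) else 0)"

lemma phi_mem_unit: "a < N \<Longrightarrow> y \<in> {0..1} \<Longrightarrow> phi N a y \<in> {0..1}"
  by (auto simp: phi_def divide_le_eq_1)

lemma funpow_phi_mem_unit: "a < N \<Longrightarrow> y \<in> {0..1} \<Longrightarrow> (phi N a ^^ i) y \<in> {0..1}"
  by (induction i) (auto intro: phi_mem_unit simp del: atLeastAtMost_iff)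

lemma probe_mem_unit:
  assumes "2 * j + 1 < N"
  shows "probe N leading j \<in> {0..1}"
proof (cases leading)
  case True
  have "(phi N (2 * j + 1) ^^ Suc N) 1 \<in> {0..1}"
    by (rule funpow_phi_mem_unit) (use assms in auto)
  then show ?thesis using True by (simp add: probe_def)
next
  case False
  have "phi N (2 * j) 0 \<in> {0..1}"
    by (rule phi_mem_unit) (use assms in auto)
  then have "phi N (2 * j + 1) (phi N (2 * j) 0) \<in> {0..1}"
    by (rule phi_mem_unit[rotated]) (use assms in auto)
  then show ?thesis using False by (simp add: probe_def)
qed

lemma strategy_mem_unit: "strategy N vs \<in> {0..1}"
proof (cases "length vs < N div 2")
  case True
  then have "2 * length vs + 1 < N" by linarith
  then show ?thesis
    using True probe_mem_unit[of "length vs" N] by (simp add: strategy_def)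
qed (simp add: strategy_def)

context self_similar_measure
begin

lemma cdf_probe_leading:
  assumes "2 * j + 1 < N" "D \<inter> {..<2 * j} = {}"
  shows "cdf \<mu> (probe N True j) = leading_value (2 * j \<in> D) (2 * j + 1 \<in> D) n (Suc N)"
proof -
  have "cdf \<mu> ((phi N (2 * j + 1) ^^ i) 1) = leading_value (2 * j \<in> D) (2 * j + 1 \<in> D) n i" for i
  proof (induction i)
    case 0
    show ?case using cdf_eq_1 by simp
  next
    case (Suc i)
    have "(phi N (2 * j + 1) ^^ i) 1 \<in> {0..1}"
      using assms by (intro funpow_phi_mem_unit) auto
    moreover have "card (D \<inter> {..<2 * j + 1}) = of_bool (2 * j \<in> D)"
      using assms card_Int_lessThan_Suc[of D "2 * j"] by simp
    ultimately show ?case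
      using assms Suc by (simp add: cdf_phi)
  qed
  from this[of "Suc N"] show ?thesis
    unfolding probe_def by (simp only: if_True)
qed

lemma cdf_probe_counted:
  assumes "2 * j + 1 < N"
  defines "c \<equiv> real (card (D \<inter> {..<2 * j}))"
  shows "cdf \<mu> (probe N False j) = (c + of_bool (2 * j \<in> D) + of_bool (2 * j + 1 \<in> D) * c / n) / n"
proof -
  have "cdf \<mu> (phi N (2 * j) 0) = c / n"
    using assms cdf_eq_0[of 0] by (simp add: cdf_phi)
  moreover have "phi N (2 * j) 0 \<in> {0..1}"
    using assms by (intro phi_mem_unit) auto
  ultimately show ?thesis
    using assms card_Int_lessThan_Suc[of D "2 * j"] by (simp add: probe_def cdf_phi)
qed

lemma cdf_probe_eq_0_iff:
  assumes "2 * j + 1 < N"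
  shows "cdf \<mu> (probe N (D \<inter> {..<2 * j} = {}) j) = 0 \<longleftrightarrow> D \<inter> {..<2 * j + 2} = {}"
proof (cases "D \<inter> {..<2 * j} = {}")
  case True
  have "D \<inter> {..<2 * j + 2} = {} \<longleftrightarrow> 2 * j \<notin> D \<and> 2 * j + 1 \<notin> D"
    using True by (auto simp: less_Suc_eq)
  then show ?thesis
    using True assms n_ge_2 by (simp add: cdf_probe_leading leading_value_eq_0_iff del: leading_value.simps)
next
  case False
  then have "0 < card (D \<inter> {..<2 * j})" by (simp add: card_gt_0_iff)
  then have "0 < cdf \<mu> (probe N False j)"
    using assms n_ge_2 by (simp add: cdf_probe_counted add_pos_nonneg)
  moreover have "D \<inter> {..<2 * j + 2} \<noteq> {}"
    using False by auto
  ultimately show ?thesis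
    using False by simp
qed

end

lemma self_similar_measure_mu_B: "digit_vector N B \<Longrightarrow> self_similar_measure N B (mu_B B)"
  by unfold_locales (auto intro: self_similar_mu_B)

lemma answers_strategy:
  assumes B: "digit_vector N B" and "j \<le> N div 2"
  shows "answers (strategy N) (F_B B) j
    = map (\<lambda>i. cdf (mu_B B) (probe N (digit_set B \<inter> {..<2 * i} = {}) i)) [0..<j]"
  using assms(2)
proof (induction j)
  case (Suc j)
  interpret self_similar_measure N B "mu_B B"
    using B by (rule self_similar_measure_mu_B)
  let ?f = "\<lambda>i. cdf (mu_B B) (probe N (D \<inter> {..<2 * i} = {}) i)"
  have j: "2 * j + 1 < N" using Suc.prems by linarith
  have "?f i = 0 \<longleftrightarrow> D \<inter> {..<2 * i + 2} = {}" if "i < j" for i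
    using that j by (intro cdf_probe_eq_0_iff) linarith
  moreover have "(\<forall>i<j. D \<inter> {..<2 * i + 2} = {}) \<longleftrightarrow> D \<inter> {..<2 * j} = {}"
  proof
    assume empty: "\<forall>i<j. D \<inter> {..<2 * i + 2} = {}"
    show "D \<inter> {..<2 * j} = {}"
    proof (rule ccontr)
      assume "D \<inter> {..<2 * j} \<noteq> {}"
      then obtain d where "d \<in> D" "d < 2 * j" by auto
      moreover from \<open>d < 2 * j\<close> have "d div 2 < j" "d < 2 * (d div 2) + 2"
        by presburger+
      ultimately show False
        using empty by blast
    qed
  qed auto
  ultimately have "(\<forall>v\<in>set (map ?f [0..<j]). v = 0) \<longleftrightarrow> D \<inter> {..<2 * j} = {}"
    by auto
  then have "strategy N (map ?f [0..<j]) = probe N (D \<inter> {..<2 * j} = {}) j"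
    using Suc.prems by (simp add: strategy_def)
  moreover have "0 \<le> probe N (D \<inter> {..<2 * j} = {}) j"
    using probe_mem_unit[OF j] by simp
  ultimately show ?case
    using Suc by (simp add: F_B_def measure_atLeastAtMost_eq_cdf)
qed simp

(* What the first j answers reveal for k = 2j: the digits below k and, once one of them is 1,
  also ||B||. *)
definition same_prefix :: "nat \<Rightarrow> nat list \<Rightarrow> nat list \<Rightarrow> bool" where
  "same_prefix k B B' \<longleftrightarrow> digit_set B \<inter> {..<k} = digit_set B' \<inter> {..<k} \<and>
     (digit_set B \<inter> {..<k} \<noteq> {} \<longrightarrow> sum_list B = sum_list B')"

lemma same_prefix_step_leading:
  assumes B: "self_similar_measure N B \<mu>" and B': "self_similar_measure N B' \<mu>'"
    and j: "2 * j + 1 < N" and prefix: "same_prefix (2 * j) B B'"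
    and empty: "digit_set B \<inter> {..<2 * j} = {}"
    and eq: "cdf \<mu> (probe N True j) = cdf \<mu>' (probe N True j)"
  shows "same_prefix (2 * j + 2) B B'"
proof -
  interpret B: self_similar_measure N B \<mu> by (rule B)
  interpret B': self_similar_measure N B' \<mu>' by (rule B')
  have empty': "B'.D \<inter> {..<2 * j} = {}"
    using prefix empty unfolding same_prefix_def by simp
  have "leading_value (2 * j \<in> B.D) (2 * j + 1 \<in> B.D) B.n (Suc N)
      = leading_value (2 * j \<in> B'.D) (2 * j + 1 \<in> B'.D) B'.n (Suc N)"
    using eq by (simp only: B.cdf_probe_leading[OF j empty] B'.cdf_probe_leading[OF j empty'])
  from leading_value_decode[OF B.n_ge_2 B.n_less_N B'.n_ge_2 B'.n_less_N this]
  have bits: "2 * j \<in> B.D \<longleftrightarrow> 2 * j \<in> B'.D" "2 * j + 1 \<in> B.D \<longleftrightarrow> 2 * j + 1 \<in> B'.D"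
    and n: "2 * j \<in> B.D \<or> 2 * j + 1 \<in> B.D \<Longrightarrow> B.n = B'.n"
    by auto
  have "B.D \<inter> {..<2 * j + 2} = B'.D \<inter> {..<2 * j + 2}"
    using empty empty' bits by (intro Int_lessThan_add_2_eqI) auto
  moreover have "B.n = B'.n" if "B.D \<inter> {..<2 * j + 2} \<noteq> {}"
  proof -
    from that obtain d where "d \<in> B.D" "d < 2 * j + 2" by auto
    moreover have "2 * j \<le> d" using empty \<open>d \<in> B.D\<close> by force
    ultimately have "d = 2 * j \<or> d = 2 * j + 1" by auto
    then show ?thesis using n \<open>d \<in> B.D\<close> by auto
  qed
  ultimately show ?thesis
    unfolding same_prefix_def by blast
qed

lemma same_prefix_step_counted:
  assumes B: "self_similar_measure N B \<mu>" and B': "self_similar_measure N B' \<mu>'"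
    and j: "2 * j + 1 < N" and prefix: "same_prefix (2 * j) B B'"
    and nonempty: "digit_set B \<inter> {..<2 * j} \<noteq> {}"
    and eq: "cdf \<mu> (probe N False j) = cdf \<mu>' (probe N False j)"
  shows "same_prefix (2 * j + 2) B B'"
proof -
  interpret B: self_similar_measure N B \<mu> by (rule B)
  interpret B': self_similar_measure N B' \<mu>' by (rule B')
  have n: "B.n = B'.n" and below: "B.D \<inter> {..<2 * j} = B'.D \<inter> {..<2 * j}"
    using prefix nonempty unfolding same_prefix_def by auto
  define c where "c = card (B.D \<inter> {..<2 * j})"
  have c': "card (B'.D \<inter> {..<2 * j}) = c"
    using below by (simp add: c_def)
  have "0 < c"
    using nonempty by (simp add: c_def card_gt_0_iff)
  have "c \<le> B.n"
    unfolding c_def B.card_D[symmetric] by (rule card_mono) auto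
  then consider "c = B.n" | "c < B.n" by linarith
  then have "(2 * j \<in> B.D \<longleftrightarrow> 2 * j \<in> B'.D) \<and> (2 * j + 1 \<in> B.D \<longleftrightarrow> 2 * j + 1 \<in> B'.D)"
  proof cases
    case 1
    have "B.D \<inter> {..<2 * j} = B.D"
      by (rule card_subset_eq) (use 1 in \<open>auto simp: c_def B.card_D\<close>)
    moreover have "B'.D \<inter> {..<2 * j} = B'.D"
      by (rule card_subset_eq) (use 1 n c' in \<open>auto simp: B'.card_D\<close>)
    ultimately have "B.D \<subseteq> {..<2 * j}" "B'.D \<subseteq> {..<2 * j}"
      by (metis Int_lower2)+
    then show ?thesis by auto
  next
    case 2
    have "(real c + of_bool (2 * j \<in> B.D) + of_bool (2 * j + 1 \<in> B.D) * real c / real B.n) / real B.n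
        = (real c + of_bool (2 * j \<in> B'.D) + of_bool (2 * j + 1 \<in> B'.D) * real c / real B.n) / real B.n"
      using eq unfolding B.cdf_probe_counted[OF j] B'.cdf_probe_counted[OF j]
      by (simp only: c_def[symmetric] c' n)
    then show ?thesis
      by (rule counted_value_decode[rotated 2]) (use \<open>0 < c\<close> 2 in auto)
  qed
  then have "B.D \<inter> {..<2 * j + 2} = B'.D \<inter> {..<2 * j + 2}"
    using below by (intro Int_lessThan_add_2_eqI) auto
  then show ?thesis
    using n unfolding same_prefix_def by blast
qed

lemma same_prefix_probes:
  assumes B: "self_similar_measure N B \<mu>" and B': "self_similar_measure N B' \<mu>'"
    and "j \<le> N div 2"
    and "\<forall>i<j. cdf \<mu> (probe N (digit_set B \<inter> {..<2 * i} = {}) i)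
            = cdf \<mu>' (probe N (digit_set B' \<inter> {..<2 * i} = {}) i)"
  shows "same_prefix (2 * j) B B'"
  using assms(3,4)
proof (induction j)
  case 0
  show ?case unfolding same_prefix_def by simp
next
  case (Suc j)
  then have j: "2 * j + 1 < N" and prefix: "same_prefix (2 * j) B B'"
    by auto
  have eq: "cdf \<mu> (probe N (digit_set B \<inter> {..<2 * j} = {}) j)
      = cdf \<mu>' (probe N (digit_set B' \<inter> {..<2 * j} = {}) j)"
    using Suc.prems by simp
  have "same_prefix (2 * j + 2) B B'"
  proof (cases "digit_set B \<inter> {..<2 * j} = {}")
    case True
    moreover have "digit_set B' \<inter> {..<2 * j} = {}"
      using True prefix unfolding same_prefix_def by simp
    ultimately show ?thesis
      using eq by (intro same_prefix_step_leading[OF B B' j prefix]) simp_all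
  next
    case False
    moreover have "digit_set B' \<inter> {..<2 * j} \<noteq> {}"
      using False prefix unfolding same_prefix_def by simp
    ultimately show ?thesis
      using eq by (intro same_prefix_step_counted[OF B B' j prefix]) simp_all
  qed
  then show ?case by simp
qed

lemma eq_if_same_prefix:
  assumes B: "digit_vector N B" and B': "digit_vector N B'"
    and "N \<le> Suc k" and prefix: "same_prefix k B B'"
  shows "B = B'"
proof -
  have below_Suc: "digit_set C \<inter> {..<Suc k} = digit_set C" if "digit_vector N C" for C
  proof -
    have "digit_set C \<subseteq> {..<Suc k}"
      using that digit_set_subset_lessThan[of C] \<open>N \<le> Suc k\<close> unfolding digit_vector_def by auto
    then show ?thesis by (rule Int_absorb2)
  qed
  have card: "card (digit_set C) = sum_list C" "2 \<le> sum_list C" if "digit_vector N C" for C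
    using that card_digit_set unfolding digit_vector_def by auto
  have "digit_set B \<inter> {..<k} \<noteq> {}"
  proof
    assume "digit_set B \<inter> {..<k} = {}"
    then have "digit_set B \<subseteq> {k}"
      using below_Suc[OF B] by (auto simp: lessThan_Suc)
    then have "card (digit_set B) \<le> 1"
      using card_mono[of "{k}"] by simp
    with card[OF B] show False by simp
  qed
  then have n: "sum_list B = sum_list B'" and below: "digit_set B \<inter> {..<k} = digit_set B' \<inter> {..<k}"
    using prefix unfolding same_prefix_def by auto
  have split: "card (digit_set C) = card (digit_set C \<inter> {..<k}) + of_bool (k \<in> digit_set C)"
    if "digit_vector N C" for C
    using card_Int_lessThan_Suc[of "digit_set C" k] below_Suc[OF that] by simp
  have "card (digit_set B \<inter> {..<k}) = card (digit_set B' \<inter> {..<k})"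
    using below by simp
  then have "of_bool (k \<in> digit_set B) = (of_bool (k \<in> digit_set B') :: nat)"
    using split[OF B] split[OF B'] card(1)[OF B] card(1)[OF B'] n by linarith
  then have "k \<in> digit_set B \<longleftrightarrow> k \<in> digit_set B'"
    by (simp only: of_bool_eq_iff)
  with below have "digit_set B \<inter> {..<Suc k} = digit_set B' \<inter> {..<Suc k}"
    by (rule Int_lessThan_Suc_eqI)
  then have "digit_set B = digit_set B'"
    unfolding below_Suc[OF B] below_Suc[OF B'] .
  then show ?thesis
    using B B' unfolding digit_vector_def by (intro digit_set_inject) auto
qed

theorem theorem2p2:
  fixes N :: nat
  assumes "N \<ge> 3"
  shows "\<exists>(k::nat) (q :: real list \<Rightarrow> real).
           k \<le> N div 2 \<and> (\<forall>vs. q vs \<in> {0..1}) \<and>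
           (\<forall>B B'. digit_vector N B \<longrightarrow> digit_vector N B' \<longrightarrow>
              answers q (F_B B) k = answers q (F_B B') k \<longrightarrow> B = B')"
proof (intro exI conjI allI impI)
  show "N div 2 \<le> N div 2" by simp
  show "strategy N vs \<in> {0..1}" for vs by (rule strategy_mem_unit)
  fix B B' assume B: "digit_vector N B" and B': "digit_vector N B'"
    and "answers (strategy N) (F_B B) (N div 2) = answers (strategy N) (F_B B') (N div 2)"
  then have "\<forall>i<N div 2. cdf (mu_B B) (probe N (digit_set B \<inter> {..<2 * i} = {}) i)
      = cdf (mu_B B') (probe N (digit_set B' \<inter> {..<2 * i} = {}) i)"
    by (simp add: answers_strategy map_eq_conv)
  then have "same_prefix (2 * (N div 2)) B B'"
    by (intro same_prefix_probes[OF self_similar_measure_mu_B[OF B] self_similar_measure_mu_B[OF B']])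
      simp_all
  then show "B = B'"
    by (rule eq_if_same_prefix[OF B B', rotated]) simp
qed

end
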